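(* ODH is population monotonic. Fix a strict priority order on $\mathcal C$ used to break all ties in ODH. Let $\sigma=\langle\mathcal V,\mathcal C,S,B\rangle$ be an approval-based multi-winner election and let $\emptyset\neq\mathcal G\subseteq\mathrm{ODH}(\sigma)$. 1. Let $\mathcal A\subseteq\mathcal C$ satisfy $\mathcal G\cap\mathcal A=\emptyset$ and $B(\mathcal A)\ge1$. Let $\sigma_1=\langle\mathcal V_1,\mathcal C,S,B_1\rangle$ be given by: $|\mathcal V_1|=|\mathcal V|$, $B_1(\mathcal A)=B(\mathcal A)-1$, $B_1(\mathcal A\cup\mathcal G)=B(\mathcal A\cup\mathcal G)+1$, and $B_1(\mathcal X)=B(\mathcal X)$ for all other $\mathcal X\subseteq\mathcal C$. Then $\mathcal G\cap\mathrm{ODH}(\sigma_1)\neq\emptyset$. 2. Let $\sigma_2=\langle\mathcal V_2,\mathcal C,S,B_2\rangle$ be given by: $|\mathcal V_2|=|\mathcal V|+1$, $B_2(\mathcal G)=B(\mathcal G)+1$, and $B_2(\mathcal X)=B(\mathcal X)$ for all $\mathcal X\neq\mathcal G$. Then $\mathcal G\cap\mathrm{ODH}(\sigma_2)\neq\emptyset$.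
   Context: An approval-based multi-winner election is a tuple $\sigma=\langle \mathcal V,\mathcal C,S,B\rangle$, where $\mathcal V$ is a finite set of agents, $\mathcal C$ is a finite set of candidates, $1\le S\le|\mathcal C|$ is an integer, and $B:2^{\mathcal C}\to\mathbb N$ gives, for each $\mathcal A\subseteq\mathcal C$, the number $B(\mathcal A)$ of agents whose ballot is exactly $\mathcal A$ (with $\sum_{\mathcal A}B(\mathcal A)\le|\mathcal V|$). For a non-empty $\mathcal A\subseteq\mathcal C$, the family $\mathfrak F_{\sigma,\mathcal A}$ is the set of all $F:2^{\mathcal C}\times\mathcal A\to\mathbb R$ such that: - $F(y,c)\ge0$ for all $y$ and $c$; - $F(y,c)=0$ if $c\notin y$; - $\sum_{c\in\mathcal A\cap y}F(y,c)=B(y)$ whenever $y\cap\mathcal A\neq\emptyset$. We write $\mathrm{Supp}_F(c)=\sum_yF(y,c)$ and $\mathrm{maxMin}(\sigma,\mathcal A)=\sup_{F\in\mathfrak F_{\sigma,\mathcal A}}\min_{c\in\mathcal A}\mathrm{Supp}_F(c)$. We also write $\mathfrak F^{\mathrm{opt}}_{\sigma,\mathcal A}=\{F\in\mathfrak F_{\sigma,\mathcal A}:\mathrm{Supp}_F(c)\ge\mathrm{maxMin}(\sigma,\mathcal A)\ \forall c\in\mathcal A\}$. The Open D'Hondt (ODH) rule proceeds as follows. Start with $\mathcal C_e=\emptyset$ and repeat $S$ times: - for each $c\in\mathcal C\setminus\mathcal C_e$, choose any $F\in\mathfrak F^{\mathrm{opt}}_{\sigma,\mathcal C_e\cup\{c\}}$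 and set $s_c=\mathrm{Supp}_F(c)$ (this value equals $\mathrm{maxMin}(\sigma,\mathcal C_e\cup\{c\})$); - then add to $\mathcal C_e$ a candidate $w\in\mathcal C\setminus\mathcal C_e$ with maximal $s_w$, breaking ties by the fixed priority order. The output $\mathcal C_e$ is denoted $\mathrm{ODH}(\sigma)$. *)

theory Defs
  imports Complex_Main
begin

text \<open>An election: number of agents nV, candidate set C (finite), committee size S,
  ballot counts B :: 'c set => nat (B y = number of agents whose ballot is exactly y).\<close>

definition valid_election :: "nat \<Rightarrow> 'c set \<Rightarrow> nat \<Rightarrow> ('c set \<Rightarrow> nat) \<Rightarrow> bool" where
  "valid_election nV C S B \<longleftrightarrow>
     finite C \<and> 1 \<le> S \<and> S \<le> card C \<and>
     (\<forall>y. \<not> y \<subseteq> C \<longrightarrow> B y = 0) \<and> (\<Sum>y\<in>Pow C. B y) \<le> nV"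

definition supp :: "'c set \<Rightarrow> ('c set \<Rightarrow> 'c \<Rightarrow> real) \<Rightarrow> 'c \<Rightarrow> real" where
  "supp C F c = (\<Sum>y\<in>Pow C. F y c)"

text \<open>The family F_{sigma,A}: only the values on 2^C x A matter.\<close>
definition flows :: "'c set \<Rightarrow> ('c set \<Rightarrow> nat) \<Rightarrow> 'c set \<Rightarrow> ('c set \<Rightarrow> 'c \<Rightarrow> real) set" where
  "flows C B A = {F. (\<forall>y\<in>Pow C. \<forall>c\<in>A. F y c \<ge> 0 \<and> (c \<notin> y \<longrightarrow> F y c = 0)) \<and>
                     (\<forall>y\<in>Pow C. y \<inter> A \<noteq> {} \<longrightarrow> (\<Sum>c\<in>A \<inter> y. F y c) = real (B y))}"

definition maxMin :: "'c set \<Rightarrow> ('c set \<Rightarrow> nat) \<Rightarrow> 'c set \<Rightarrow> real" where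
  "maxMin C B A = Sup ((\<lambda>F. Min (supp C F ` A)) ` flows C B A)"

definition odh_next :: "'c list \<Rightarrow> 'c set \<Rightarrow> ('c set \<Rightarrow> nat) \<Rightarrow> 'c set \<Rightarrow> 'c" where
  "odh_next prio C B Ce =
     (let R = C - Ce;
          m = Max ((\<lambda>c. maxMin C B (Ce \<union> {c})) ` R)
      in hd (filter (\<lambda>c. c \<in> R \<and> maxMin C B (Ce \<union> {c}) = m) prio))"

primrec odh_iter :: "'c list \<Rightarrow> 'c set \<Rightarrow> ('c set \<Rightarrow> nat) \<Rightarrow> nat \<Rightarrow> 'c set" where
  "odh_iter prio C B 0 = {}"
| "odh_iter prio C B (Suc k) =
     (let Ce = odh_iter prio C B k in Ce \<union> {odh_next prio C B Ce})"

definition ODH :: "'c list \<Rightarrow> 'c set \<Rightarrow> nat \<Rightarrow> ('c set \<Rightarrow> nat) \<Rightarrow> 'c set" where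
  "ODH prio C S B = odh_iter prio C B S"

end

theory Submission
  imports Defs
begin

text \<open>Say that ballot data B' dominates B on a committee X if every flow for B on X is
  dominated, candidate by candidate, by some flow for B'; then maxMin can only grow. Adding a
  voter yields domination, and so does moving a voter from ballot A to A \<union> G, since the
  voter can keep its share of the old flow. On committees disjoint from G both changes can
  be undone, so their scores stay the same. Hence the two ODH runs agree as long as no member
  of G has been elected: in each round the scores outside G are unchanged and those inside G
  have not decreased, so the new run elects either the same candidate or one from G.\<close>

lemma flows_nonempty:
  assumes "finite X"
  shows "flows C B X \<noteq> {}"
proof -
  define F where "F = (\<lambda>y c. if c \<in> y then real (B y) / real (card (X \<inter> y)) else 0)"
  have "F \<in> flows C B X"
    unfolding flows_def
  proof (intro CollectI conjI ballI impI)
    fix y assume "y \<in> Pow C" "y \<inter> X \<noteq> {}"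
    then have "card (X \<inter> y) \<noteq> 0" using assms by auto
    moreover have "(\<Sum>c\<in>X \<inter> y. F y c) = (\<Sum>c\<in>X \<inter> y. real (B y) / real (card (X \<inter> y)))"
      by (rule sum.cong) (auto simp: F_def)
    ultimately show "(\<Sum>c\<in>X \<inter> y. F y c) = real (B y)" by simp
  qed (auto simp: F_def)
  then show ?thesis by blast
qed

lemma flows_cong:
  assumes "\<And>y. y \<in> Pow C \<Longrightarrow> y \<inter> X \<noteq> {} \<Longrightarrow> B y = B' y"
  shows "flows C B X = flows C B' X"
  unfolding flows_def using assms by (intro Collect_cong) (auto cong: conj_cong)

lemma flow_le_ballot:
  assumes F: "F \<in> flows C B X" and "finite X" "c \<in> X" "y \<in> Pow C"
  shows "F y c \<le> real (B y)"
proof (cases "c \<in> y")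
  case True
  then have "F y c \<le> (\<Sum>c\<in>X \<inter> y. F y c)"
    using assms by (intro member_le_sum) (auto simp: flows_def)
  also have "\<dots> = real (B y)" using F True assms(3,4) unfolding flows_def by auto
  finally show ?thesis .
next
  case False
  then show ?thesis using assms unfolding flows_def by auto
qed

lemma supp_le_total:
  assumes "F \<in> flows C B X" "finite X" "c \<in> X"
  shows "supp C F c \<le> (\<Sum>y\<in>Pow C. real (B y))"
  unfolding supp_def by (rule sum_mono) (rule flow_le_ballot[OF assms])

lemma supp_fun_upd:
  assumes "finite C" "y \<in> Pow C"
  shows "supp C (F(y := g)) c = supp C F c - F y c + g c"
proof -
  have "supp C (F(y := g)) c = g c + (\<Sum>z\<in>Pow C - {y}. F z c)"
    unfolding supp_def using assms by (simp add: sum.remove[of "Pow C" y])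
  moreover have "supp C F c = F y c + (\<Sum>z\<in>Pow C - {y}. F z c)"
    unfolding supp_def using assms by (simp add: sum.remove[of "Pow C" y])
  ultimately show ?thesis by simp
qed

definition unit_weight :: "'c set \<Rightarrow> 'c set \<Rightarrow> ('c \<Rightarrow> real) \<Rightarrow> bool" where
  "unit_weight X y w \<longleftrightarrow>
     (\<forall>c\<in>X. 0 \<le> w c) \<and> (\<forall>c\<in>X - y. w c = 0) \<and> (\<Sum>c\<in>X \<inter> y. w c) = 1"

lemma unit_weight_exists:
  assumes "finite X" "X \<inter> y \<noteq> {}"
  shows "\<exists>w. unit_weight X y w"
proof -
  define w where "w = (\<lambda>c. if c \<in> y then 1 / real (card (X \<inter> y)) else 0)"
  have "card (X \<inter> y) \<noteq> 0" using assms by auto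
  moreover have "(\<Sum>c\<in>X \<inter> y. w c) = (\<Sum>c\<in>X \<inter> y. 1 / real (card (X \<inter> y)))"
    by (rule sum.cong) (auto simp: w_def)
  ultimately have "unit_weight X y w" by (auto simp: unit_weight_def w_def)
  then show ?thesis by blast
qed

lemma flows_add_ballot:
  assumes F: "F \<in> flows C B X" and y: "y \<in> Pow C" and w: "unit_weight X y w"
  shows "F(y := \<lambda>c. F y c + w c) \<in> flows C (B(y := B y + 1)) X"
  unfolding flows_def
proof (intro CollectI conjI ballI impI)
  fix z assume z: "z \<in> Pow C" "z \<inter> X \<noteq> {}"
  show "(\<Sum>c\<in>X \<inter> z. (F(y := \<lambda>c. F y c + w c)) z c) = real ((B(y := B y + 1)) z)"
  proof (cases "z = y")
    case True
    then have "(\<Sum>c\<in>X \<inter> z. (F(y := \<lambda>c. F y c + w c)) z c) = (\<Sum>c\<in>X \<inter> y. F y c) + 1"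
      using w by (simp add: sum.distrib unit_weight_def)
    then show ?thesis using F z True unfolding flows_def by (auto simp: Int_commute)
  next
    case False
    then show ?thesis using F z unfolding flows_def by auto
  qed
qed (use F w in \<open>auto simp: flows_def unit_weight_def\<close>)

lemma flows_remove_ballot:
  assumes F: "F \<in> flows C B X" and y: "y \<in> Pow C" and b: "1 \<le> B y"
  shows "F(y := \<lambda>c. F y c - F y c / B y) \<in> flows C (B(y := B y - 1)) X"
  unfolding flows_def
proof (intro CollectI conjI ballI impI)
  fix z c assume "z \<in> Pow C" "c \<in> X"
  then have "0 \<le> F z c" using F by (auto simp: flows_def)
  moreover have "F y c / B y \<le> F y c" if "0 \<le> F y c"
    using b that by (simp add: divide_le_eq mult_le_cancel_left1)
  ultimately show "0 \<le> (F(y := \<lambda>c. F y c - F y c / B y)) z c" by auto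
next
  fix z assume z: "z \<in> Pow C" "z \<inter> X \<noteq> {}"
  show "(\<Sum>c\<in>X \<inter> z. (F(y := \<lambda>c. F y c - F y c / B y)) z c) = real ((B(y := B y - 1)) z)"
  proof (cases "z = y")
    case True
    have "(\<Sum>c\<in>X \<inter> y. F y c) = real (B y)"
      using F z True unfolding flows_def by (auto simp: Int_commute)
    then have "(\<Sum>c\<in>X \<inter> z. (F(y := \<lambda>c. F y c - F y c / B y)) z c) = real (B y) - 1"
      using True b by (simp add: sum_subtractf flip: sum_divide_distrib)
    then show ?thesis using True b by (simp add: of_nat_diff)
  next
    case False
    then show ?thesis using F z unfolding flows_def by auto
  qed
qed (use F in \<open>auto simp: flows_def\<close>)

definition flow_dominated :: "'c set \<Rightarrow> 'c set \<Rightarrow> ('c set \<Rightarrow> nat) \<Rightarrow> ('c set \<Rightarrow> nat) \<Rightarrow> bool" where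
  "flow_dominated C X B B' \<longleftrightarrow>
     (\<forall>F\<in>flows C B X. \<exists>F'\<in>flows C B' X. \<forall>c\<in>X. supp C F c \<le> supp C F' c)"

lemma maxMin_mono_if_dominated:
  assumes X: "finite X" "X \<noteq> {}" and dom: "flow_dominated C X B B'"
  shows "maxMin C B X \<le> maxMin C B' X"
  unfolding maxMin_def
proof (rule cSup_mono)
  show "(\<lambda>F. Min (supp C F ` X)) ` flows C B X \<noteq> {}" using flows_nonempty[OF X(1)] by blast
next
  obtain c0 where c0: "c0 \<in> X" using X by blast
  show "bdd_above ((\<lambda>F. Min (supp C F ` X)) ` flows C B' X)"
  proof (rule bdd_aboveI2)
    fix F assume F: "F \<in> flows C B' X"
    have "Min (supp C F ` X) \<le> supp C F c0" using X c0 by (intro Min_le) auto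
    also have "\<dots> \<le> (\<Sum>y\<in>Pow C. real (B' y))" by (rule supp_le_total[OF F X(1) c0])
    finally show "Min (supp C F ` X) \<le> (\<Sum>y\<in>Pow C. real (B' y))" .
  qed
next
  fix m assume "m \<in> (\<lambda>F. Min (supp C F ` X)) ` flows C B X"
  then obtain F where F: "F \<in> flows C B X" and m: "m = Min (supp C F ` X)" by blast
  obtain F' where F': "F' \<in> flows C B' X" and le: "\<forall>c\<in>X. supp C F c \<le> supp C F' c"
    using dom F unfolding flow_dominated_def by blast
  obtain c1 where c1: "c1 \<in> X" "Min (supp C F' ` X) = supp C F' c1"
    using X by (metis (no_types, lifting) Min_in finite_imageI image_iff image_is_empty)
  have "m \<le> supp C F c1" unfolding m using X c1 by (intro Min_le) auto
  also have "\<dots> \<le> Min (supp C F' ` X)" using le c1 by simp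
  finally show "\<exists>m'\<in>(\<lambda>F. Min (supp C F ` X)) ` flows C B' X. m \<le> m'" using F' by blast
qed

lemma flow_dominated_add_ballot:
  assumes C: "finite C" and X: "finite X" and y: "y \<in> Pow C"
  shows "flow_dominated C X B (B(y := B y + 1))"
proof (cases "X \<inter> y = {}")
  case True
  then have "flows C B X = flows C (B(y := B y + 1)) X" by (intro flows_cong) auto
  then show ?thesis unfolding flow_dominated_def by blast
next
  case False
  then obtain w where w: "unit_weight X y w" using unit_weight_exists[OF X] by blast
  show ?thesis unfolding flow_dominated_def
  proof
    fix F assume F: "F \<in> flows C B X"
    have "\<forall>c\<in>X. supp C F c \<le> supp C (F(y := \<lambda>c. F y c + w c)) c"
      using w by (simp add: supp_fun_upd[OF C y] unit_weight_def)
    then show "\<exists>F'\<in>flows C (B(y := B y + 1)) X. \<forall>c\<in>X. supp C F c \<le> supp C F' c"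
      using flows_add_ballot[OF F y w] by blast
  qed
qed

lemma flow_dominated_move_ballot:
  assumes C: "finite C" and X: "finite X" and y1: "y1 \<in> Pow C" and y2: "y2 \<in> Pow C"
    and ne: "y1 \<noteq> y2" and b: "1 \<le> B y1" and sub: "X \<inter> y1 \<subseteq> y2"
  shows "flow_dominated C X B (B(y1 := B y1 - 1, y2 := B y2 + 1))"
proof -
  define B1 where "B1 = B(y1 := B y1 - 1)"
  have B': "B(y1 := B y1 - 1, y2 := B y2 + 1) = B1(y2 := B1 y2 + 1)"
    using ne by (simp add: B1_def)
  show ?thesis
  proof (cases "X \<inter> y1 = {}")
    case True
    then have "flows C B X = flows C B1 X" by (intro flows_cong) (auto simp: B1_def)
    then show ?thesis
      using flow_dominated_add_ballot[OF C X y2, of B1] unfolding B' flow_dominated_def by simp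
  next
    case False
    show ?thesis unfolding B' flow_dominated_def
    proof
      fix F assume F: "F \<in> flows C B X"
      define v where "v c = F y1 c / B y1" for c
      define F1 where "F1 = F(y1 := \<lambda>c. F y1 c - v c)"
      have F1: "F1 \<in> flows C B1 X"
        unfolding F1_def v_def B1_def by (rule flows_remove_ballot[OF F y1 b])
      have Fz: "F y1 c = 0" if "c \<in> X - y1" for c using F y1 that by (auto simp: flows_def)
      have "(\<Sum>c\<in>X \<inter> y2. v c) = (\<Sum>c\<in>X \<inter> y1. v c)"
        using X sub Fz by (intro sum.mono_neutral_right) (auto simp: v_def)
      also have "\<dots> = 1"
        using F y1 False b unfolding flows_def by (auto simp: v_def Int_commute simp flip: sum_divide_distrib)
      finally have "unit_weight X y2 v"
        using F y1 b sub Fz unfolding unit_weight_def flows_def by (auto simp: v_def)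
      \<comment> \<open>The voter takes its share of F along: supports are unchanged.\<close>
      then have "F1(y2 := \<lambda>c. F1 y2 c + v c) \<in> flows C (B1(y2 := B1 y2 + 1)) X"
        by (rule flows_add_ballot[OF F1 y2])
      moreover have "supp C (F1(y2 := \<lambda>c. F1 y2 c + v c)) c = supp C F c" for c
        by (simp add: supp_fun_upd[OF C y1] supp_fun_upd[OF C y2] F1_def)
      ultimately show "\<exists>F'\<in>flows C (B1(y2 := B1 y2 + 1)) X. \<forall>c\<in>X. supp C F c \<le> supp C F' c"
        by (metis order_refl)
    qed
  qed
qed

definition first_argmax :: "'c list \<Rightarrow> 'c set \<Rightarrow> ('c \<Rightarrow> 'b::linorder) \<Rightarrow> 'c" where
  "first_argmax prio R f = hd (filter (\<lambda>c. c \<in> R \<and> f c = Max (f ` R)) prio)"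

lemma odh_next_eq_first_argmax:
  "odh_next prio C B Ce = first_argmax prio (C - Ce) (\<lambda>c. maxMin C B (Ce \<union> {c}))"
  by (simp add: odh_next_def first_argmax_def Let_def)

lemma hd_filter_strengthen:
  assumes "\<And>x. P x \<Longrightarrow> Q x" "P (hd (filter Q xs))"
  shows "hd (filter P xs) = hd (filter Q xs)"
  using assms(2) by (induction xs) (auto dest: assms(1))

lemma first_argmax_raise:
  assumes R: "finite R" "R \<subseteq> set prio"
    and le: "\<And>c. c \<in> R \<Longrightarrow> f c \<le> f' c"
    and eq: "\<And>c. c \<in> R - G \<Longrightarrow> f c = f' c"
  shows "first_argmax prio R f' \<in> G \<or> first_argmax prio R f = first_argmax prio R f'"
proof (cases "R = {}")
  case True
  then show ?thesis by (simp add: first_argmax_def)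
next
  case R_ne: False
  define P where "P = (\<lambda>c. c \<in> R \<and> f c = Max (f ` R))"
  define Q where "Q = (\<lambda>c. c \<in> R \<and> f' c = Max (f' ` R))"
  let ?w = "hd (filter Q prio)"
  have "Max (f' ` R) \<in> f' ` R" using R(1) R_ne by simp
  then obtain x where "x \<in> R" "f' x = Max (f' ` R)" by auto
  then have "filter Q prio \<noteq> []" using R(2) by (auto simp: Q_def filter_empty_conv)
  then have "Q ?w" using hd_in_set[of "filter Q prio"] by simp
  then have w: "?w \<in> R" "f' ?w = Max (f' ` R)" by (simp_all add: Q_def)
  show ?thesis
  proof (cases "?w \<in> G")
    case True
    then show ?thesis by (simp add: first_argmax_def Q_def)
  next
    case False
    have f'_le: "f' c \<le> Max (f' ` R)" if "c \<in> R" for c using R(1) that by simp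
    have "Max (f ` R) \<le> Max (f' ` R)"
      using R(1) R_ne by (simp add: Max_le_iff) (meson f'_le le order_trans)
    moreover have "f ?w \<le> Max (f ` R)" using R(1) w(1) by simp
    moreover have "f ?w = Max (f' ` R)" using eq[of ?w] w False by simp
    ultimately have max_eq: "Max (f ` R) = Max (f' ` R)" by simp
    have "P c \<Longrightarrow> Q c" for c using le[of c] f'_le[of c] max_eq by (auto simp: P_def Q_def)
    moreover have "P ?w" using w \<open>f ?w = Max (f' ` R)\<close> max_eq by (simp add: P_def)
    ultimately have "hd (filter P prio) = ?w" by (rule hd_filter_strengthen)
    then show ?thesis by (simp add: first_argmax_def P_def Q_def)
  qed
qed

lemma odh_iter_finite: "finite (odh_iter prio C B k)"
  by (induction k) (auto simp: Let_def)

lemma odh_iter_agree_or_meet: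
  assumes prio: "set prio = C" and C: "finite C"
    and le: "\<And>X. finite X \<Longrightarrow> X \<noteq> {} \<Longrightarrow> maxMin C B X \<le> maxMin C B' X"
    and eq: "\<And>X. finite X \<Longrightarrow> X \<noteq> {} \<Longrightarrow> X \<inter> G = {} \<Longrightarrow> maxMin C B X = maxMin C B' X"
  shows "odh_iter prio C B k = odh_iter prio C B' k \<and> G \<inter> odh_iter prio C B k = {}
    \<or> G \<inter> odh_iter prio C B' k \<noteq> {}"
proof (induction k)
  case 0
  then show ?case by simp
next
  case (Suc k)
  show ?case
  proof (cases "G \<inter> odh_iter prio C B' k = {}")
    case False
    then show ?thesis by (auto simp: Let_def)
  next
    case True
    define Ce where "Ce = odh_iter prio C B k"
    have same: "odh_iter prio C B' k = Ce" and dis: "G \<inter> Ce = {}"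
      using Suc True by (auto simp: Ce_def)
    have "finite Ce" unfolding Ce_def by (rule odh_iter_finite)
    then have "first_argmax prio (C - Ce) (\<lambda>c. maxMin C B' (Ce \<union> {c})) \<in> G
        \<or> first_argmax prio (C - Ce) (\<lambda>c. maxMin C B (Ce \<union> {c}))
          = first_argmax prio (C - Ce) (\<lambda>c. maxMin C B' (Ce \<union> {c}))"
      using C prio dis by (intro first_argmax_raise le eq) auto
    then show ?thesis using dis
      by (auto simp: Let_def same odh_next_eq_first_argmax simp flip: Ce_def)
  qed
qed

lemma ODH_meets_if_raised:
  assumes prio: "set prio = C" and C: "finite C"
    and le: "\<And>X. finite X \<Longrightarrow> X \<noteq> {} \<Longrightarrow> maxMin C B X \<le> maxMin C B' X"
    and eq: "\<And>X. finite X \<Longrightarrow> X \<noteq> {} \<Longrightarrow> X \<inter> G = {} \<Longrightarrow> maxMin C B X = maxMin C B' X"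
    and G: "G \<inter> ODH prio C S B \<noteq> {}"
  shows "G \<inter> ODH prio C S B' \<noteq> {}"
  using odh_iter_agree_or_meet[OF prio C le eq, where k = S] G by (auto simp: ODH_def)

lemma ODH_move_voter_to_group:
  assumes prio: "set prio = C" and C: "finite C"
    and A: "A \<in> Pow C" "A \<union> G \<in> Pow C" "G \<inter> A = {}" "1 \<le> B A" and G: "G \<noteq> {}"
    and meets: "G \<inter> ODH prio C S B \<noteq> {}"
  shows "G \<inter> ODH prio C S (B(A := B A - 1, A \<union> G := B (A \<union> G) + 1)) \<noteq> {}"
proof -
  define B1 where "B1 = B(A := B A - 1, A \<union> G := B (A \<union> G) + 1)"
  have ne: "A \<noteq> A \<union> G" using A(3) G by blast
  have B: "B = B1(A \<union> G := B1 (A \<union> G) - 1, A := B1 A + 1)"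
    using ne A(4) by (auto simp: B1_def)
  have B_le_B1: "maxMin C B X \<le> maxMin C B1 X" if "finite X" "X \<noteq> {}" for X
    using that unfolding B1_def
    by (intro maxMin_mono_if_dominated flow_dominated_move_ballot) (use C A ne in auto)
  \<comment> \<open>On X disjoint from G the ballots A and A \<union> G look alike, so the move can be undone.\<close>
  have B1_le_B: "maxMin C B1 X \<le> maxMin C B X" if "finite X" "X \<noteq> {}" "X \<inter> G = {}" for X
  proof -
    have "maxMin C B1 X \<le> maxMin C (B1(A \<union> G := B1 (A \<union> G) - 1, A := B1 A + 1)) X"
      using that by (intro maxMin_mono_if_dominated flow_dominated_move_ballot)
        (use C A ne in \<open>auto simp: B1_def\<close>)
    then show ?thesis using B by simp
  qed
  have B_eq_B1: "maxMin C B X = maxMin C B1 X" if "finite X" "X \<noteq> {}" "X \<inter> G = {}" for X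
    using B_le_B1[OF that(1,2)] B1_le_B[OF that] by (rule antisym)
  have "G \<inter> ODH prio C S B1 \<noteq> {}" by (rule ODH_meets_if_raised[OF prio C B_le_B1 B_eq_B1 meets])
  then show ?thesis by (simp add: B1_def)
qed

lemma ODH_add_voter_for_group:
  assumes prio: "set prio = C" and C: "finite C" and G: "G \<in> Pow C"
    and meets: "G \<inter> ODH prio C S B \<noteq> {}"
  shows "G \<inter> ODH prio C S (B(G := B G + 1)) \<noteq> {}"
proof (rule ODH_meets_if_raised[OF prio C _ _ meets])
  fix X :: "'a set" assume "finite X" "X \<noteq> {}"
  then show "maxMin C B X \<le> maxMin C (B(G := B G + 1)) X"
    by (intro maxMin_mono_if_dominated flow_dominated_add_ballot C G)
next
  fix X :: "'a set" assume "X \<inter> G = {}"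
  then have "flows C B X = flows C (B(G := B G + 1)) X" by (intro flows_cong) auto
  then show "maxMin C B X = maxMin C (B(G := B G + 1)) X" by (simp add: maxMin_def)
qed

theorem theorem6:
  fixes prio :: "'c list" and C :: "'c set" and S nV :: nat and B :: "'c set \<Rightarrow> nat"
    and G :: "'c set"
  assumes prio: "distinct prio" "set prio = C"
    and el: "valid_election nV C S B"
    and G: "G \<noteq> {}" "G \<subseteq> ODH prio C S B"
  shows
    "(\<forall>A B1. A \<subseteq> C \<and> G \<inter> A = {} \<and> B A \<ge> 1 \<and>
        B1 = B(A := B A - 1, A \<union> G := B (A \<union> G) + 1) \<and> valid_election nV C S B1
        \<longrightarrow> G \<inter> ODH prio C S B1 \<noteq> {})
   \<and> (\<forall>B2. B2 = B(G := B G + 1) \<and> valid_election (nV + 1) C S B2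
        \<longrightarrow> G \<inter> ODH prio C S B2 \<noteq> {})"
proof -
  have C: "finite C" using el by (simp add: valid_election_def)
  have meets: "G \<inter> ODH prio C S B \<noteq> {}" using G by blast
  have ballot_in_Pow: "y \<in> Pow C" if "valid_election n C S B'" "B' y \<noteq> 0" for n B' y
    using that by (auto simp: valid_election_def)
  show ?thesis
  proof (intro conjI allI impI; elim conjE)
    fix A B1
    assume "A \<subseteq> C" "G \<inter> A = {}" "1 \<le> B A" and B1: "B1 = B(A := B A - 1, A \<union> G := B (A \<union> G) + 1)"
      and "valid_election nV C S B1"
    moreover have "A \<union> G \<in> Pow C" using calculation by (intro ballot_in_Pow) auto
    ultimately show "G \<inter> ODH prio C S B1 \<noteq> {}"
      using ODH_move_voter_to_group[OF prio(2) C _ _ _ _ G(1) meets] by simp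
  next
    fix B2 assume "B2 = B(G := B G + 1)" "valid_election (nV + 1) C S B2"
    moreover have "G \<in> Pow C" using calculation by (intro ballot_in_Pow) auto
    ultimately show "G \<inter> ODH prio C S B2 \<noteq> {}"
      using ODH_add_voter_for_group[OF prio(2) C _ meets] by simp
  qed
qed

end
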